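(* Let $n\ge3$ and let $l$ be the largest SIA index among all $n\times n$ SIA matrices. Among the sets $\mathcal S_1,\mathcal S_2,\ldots,\mathcal S_l$, the set $\mathcal S_1$ is the only one that is closed under matrix multiplication (i.e., $P,Q\in\mathcal S_k\Rightarrow PQ\in\mathcal S_k$ holds for $k=1$ and fails for every $2\le k\le l$).
   Context: Let $\mathcal N=\{1,\ldots,n\}$. A matrix is stochastic if it is entrywise nonnegative with row sums $1$. For stochastic $P$ and $\mathcal A\subseteq\mathcal N$, $F_P(\mathcal A)=\{j:\ p_{ij}>0\text{ for some } i\in\mathcal A\}$, $F_P^1=F_P$, $F_P^k(\mathcal A)=F_P(F_P^{k-1}(\mathcal A))$. $P$ is SIA if $\lim_{m\to\infty}P^m=\mathbf 1c^T$ for some nonnegative $c$ with entries summing to $1$. For an SIA matrix $P$ and each unordered pair of disjoint nonempty sets $\mathcal A,\tilde{\mathcal A}\subseteq\mathcal N$, let $s(\mathcal A,\tilde{\mathcal A})$ be the smallest integer $k\ge1$ such that either (i) $F_P^k(\mathcal A)\cap F_P^k(\tilde{\mathcal A})\ne\emptyset$, or (ii) $F_P^k(\mathcal A)\cap F_P^k(\tilde{\mathcal A})=\emptyset$ and $|F_P^k(\mathcal A)\cup F_P^k(\tilde{\mathcal A})|>|\mathcal A\cup\tilde{\mathcal A}|$. The SIA index of $P$ is the maximum of $s(\mathcal A,\tilde{\mathcal A})$ over all such pairs (it is at most $n(n-1)/2$). $\mathcal V_k$ is the set of $n\times n$ SIA matrices with SIA index exactly $k$, and $\mathcal S_k=\bigcup_{r=1}^k\mathcal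 V_r$. The set $\mathcal S_1$ coincides with the class of stochastic Sarymsakov matrices: stochastic $P$ such that for any disjoint nonempty $\mathcal A,\tilde{\mathcal A}\subseteq\mathcal N$, either $F_P(\mathcal A)\cap F_P(\tilde{\mathcal A})\neq\emptyset$, or $F_P(\mathcal A)\cap F_P(\tilde{\mathcal A})=\emptyset$ and $|F_P(\mathcal A)\cup F_P(\tilde{\mathcal A})|>|\mathcal A\cup\tilde{\mathcal A}|$. *)

theory Defs
  imports "HOL-Analysis.Analysis"
begin

text \<open>n x n real matrices are rendered as real^'n^'n, with N = UNIV :: 'n set, n = CARD('n).\<close>

definition stochastic :: "real^'n^'n \<Rightarrow> bool" where
  "stochastic P \<longleftrightarrow> (\<forall>i j. 0 \<le> P $ i $ j) \<and> (\<forall>i. (\<Sum>j\<in>UNIV. P $ i $ j) = 1)"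

definition mpow :: "real^'n^'n \<Rightarrow> nat \<Rightarrow> real^'n^'n" where
  "mpow P m = (((**) P) ^^ m) (mat 1)"

definition SIA :: "real^'n^'n \<Rightarrow> bool" where
  "SIA P \<longleftrightarrow> stochastic P \<and>
     (\<exists>c::real^'n. (\<forall>j. 0 \<le> c $ j) \<and> (\<Sum>j\<in>UNIV. c $ j) = 1 \<and>
        (\<lambda>m. mpow P m) \<longlonglongrightarrow> (\<chi> i. c))"

definition Fset :: "real^'n^'n \<Rightarrow> 'n set \<Rightarrow> 'n set" where
  "Fset P A = {j. \<exists>i\<in>A. P $ i $ j > 0}"

definition Fpow :: "real^'n^'n \<Rightarrow> nat \<Rightarrow> 'n set \<Rightarrow> 'n set" where
  "Fpow P k A = (Fset P ^^ k) A"

definition s_step :: "real^'n^'n \<Rightarrow> 'n set \<Rightarrow> 'n set \<Rightarrow> nat" where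
  "s_step P A B = (LEAST k. 1 \<le> k \<and>
      (Fpow P k A \<inter> Fpow P k B \<noteq> {} \<or>
       (Fpow P k A \<inter> Fpow P k B = {} \<and> card (Fpow P k A \<union> Fpow P k B) > card (A \<union> B))))"

definition SIA_index :: "real^'n^'n \<Rightarrow> nat" where
  "SIA_index P = Max {s_step P A B | A B. A \<noteq> {} \<and> B \<noteq> {} \<and> A \<inter> B = {}}"

definition V_set :: "nat \<Rightarrow> (real^'n^'n) set" where
  "V_set k = {P. SIA P \<and> SIA_index P = k}"

definition S_set :: "nat \<Rightarrow> (real^'n^'n) set" where
  "S_set k = (\<Union>r\<in>{1..k}. V_set r)"

definition mult_closed :: "(real^'n^'n) set \<Rightarrow> bool" where
  "mult_closed X \<longleftrightarrow> (\<forall>P\<in>X. \<forall>Q\<in>X. P ** Q \<in> X)"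

end

theory Submission
  imports Defs
begin

text \<open>A matrix has SIA index 1 exactly when it is Sarymsakov. Products of Sarymsakov matrices are
  Sarymsakov: if \<open>P\<close> keeps the successor sets of \<open>A\<close> and \<open>B\<close> apart it enlarges their union, and
  \<open>Q\<close> then either merges them or enlarges them further. Sarymsakov matrices are SIA: while the
  images of two states stay disjoint their union grows, so after \<open>n\<close> steps they meet; hence \<open>P\<^sup>n\<close>
  is scrambling, and a scrambling power contracts the spread of every column of \<open>P\<^sup>m\<close>
  geometrically. For \<open>k \<ge> 2\<close>, the 0-1 matrices of self-maps \<open>f\<close>, \<open>g\<close> with constant squares have
  SIA index at most 2, while their product, the matrix of \<open>g \<circ> f\<close>, can have two fixed points and
  then is not even SIA.\<close>

section \<open>Stochastic matrices and successor sets\<close>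

lemma mpow_0 [simp]: "mpow P 0 = mat 1"
  by (simp add: mpow_def)

lemma mpow_Suc: "mpow P (Suc m) = P ** mpow P m"
  by (simp add: mpow_def)

lemma mpow_add: "mpow P (m + k) = mpow P m ** mpow P k"
  by (induction m) (simp_all add: mpow_Suc matrix_mul_assoc)

lemma sum_pos_iff_ex_pos:
  fixes f :: "'a \<Rightarrow> real"
  assumes "finite A" "\<And>x. x \<in> A \<Longrightarrow> 0 \<le> f x"
  shows "0 < sum f A \<longleftrightarrow> (\<exists>x\<in>A. 0 < f x)"
  using assms sum_nonneg[of A f] sum_nonneg_eq_0_iff[of A f] by (force simp: order_less_le)

lemma stochastic_nonneg: "stochastic P \<Longrightarrow> 0 \<le> P $ i $ j"
  by (simp add: stochastic_def)

lemma stochastic_row_sum: "stochastic P \<Longrightarrow> (\<Sum>j\<in>UNIV. P $ i $ j) = 1"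
  by (simp add: stochastic_def)

lemma stochastic_le_1:
  assumes "stochastic P"
  shows "P $ i $ j \<le> 1"
proof -
  have "P $ i $ j \<le> (\<Sum>k\<in>UNIV. P $ i $ k)"
    by (rule member_le_sum) (auto simp: stochastic_nonneg[OF assms])
  then show ?thesis
    using stochastic_row_sum[OF assms] by simp
qed

lemma stochastic_mat_1: "stochastic (mat 1 :: real^'n^'n)"
  by (simp add: stochastic_def mat_def)

lemma stochastic_mult:
  assumes P: "stochastic P" and Q: "stochastic Q"
  shows "stochastic (P ** Q)"
proof -
  have "(\<Sum>j\<in>UNIV. (P ** Q) $ i $ j) = (\<Sum>k\<in>UNIV. P $ i $ k * (\<Sum>j\<in>UNIV. Q $ k $ j))" for i
    by (simp add: matrix_matrix_mult_def sum_distrib_left) (rule sum.swap)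
  then show ?thesis
    using P Q unfolding stochastic_def matrix_matrix_mult_def by (simp add: sum_nonneg)
qed

lemma stochastic_mpow: "stochastic P \<Longrightarrow> stochastic (mpow P m)"
  by (induction m) (simp_all add: stochastic_mat_1 mpow_Suc stochastic_mult)

lemma Fset_matrix_mult:
  assumes "\<And>i j. 0 \<le> P $ i $ j" "\<And>i j. 0 \<le> Q $ i $ j"
  shows "Fset (P ** Q) A = Fset Q (Fset P A)"
proof -
  have "0 < (P ** Q) $ i $ j \<longleftrightarrow> (\<exists>k. 0 < P $ i $ k \<and> 0 < Q $ k $ j)" for i j
    using assms unfolding matrix_matrix_mult_def
    by (simp add: sum_pos_iff_ex_pos zero_less_mult_iff) (meson not_less)
  then show ?thesis
    unfolding Fset_def by blast
qed

lemma Fset_mat_1: "Fset (mat 1) A = A"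
  by (auto simp: Fset_def mat_def)

lemma Fset_mono: "A \<subseteq> B \<Longrightarrow> Fset P A \<subseteq> Fset P B"
  unfolding Fset_def by auto

lemma Fset_nonempty:
  assumes "stochastic P" "A \<noteq> {}"
  shows "Fset P A \<noteq> {}"
proof -
  obtain i where "i \<in> A"
    using assms(2) by blast
  moreover have "\<exists>j. 0 < P $ i $ j"
    using sum_pos_iff_ex_pos[of UNIV "\<lambda>j. P $ i $ j"]
    by (simp add: stochastic_row_sum[OF assms(1)] stochastic_nonneg[OF assms(1)])
  ultimately show ?thesis
    unfolding Fset_def by blast
qed

lemma Fset_Int_nonempty:
  assumes "stochastic P" "A \<inter> B \<noteq> {}"
  shows "Fset P A \<inter> Fset P B \<noteq> {}"
proof -
  obtain j where "j \<in> A" "j \<in> B"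
    using assms(2) by blast
  then have "Fset P {j} \<subseteq> Fset P A \<inter> Fset P B"
    by (auto intro: Fset_mono[THEN subsetD])
  then show ?thesis
    using Fset_nonempty[OF assms(1), of "{j}"] by blast
qed

lemma Fpow_0 [simp]: "Fpow P 0 A = A"
  by (simp add: Fpow_def)

lemma Fpow_Suc: "Fpow P (Suc k) A = Fset P (Fpow P k A)"
  by (simp add: Fpow_def)

lemma Fpow_nonempty: "stochastic P \<Longrightarrow> A \<noteq> {} \<Longrightarrow> Fpow P k A \<noteq> {}"
  by (induction k) (simp_all add: Fpow_Suc Fset_nonempty)

lemma Fpow_eq_Fset_mpow:
  assumes "stochastic P"
  shows "Fpow P k A = Fset (mpow P k) A"
proof (induction k arbitrary: A)
  case 0
  show ?case by (simp add: Fset_mat_1)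
next
  case (Suc k)
  have "Fpow P (Suc k) A = Fpow P k (Fset P A)"
    by (simp only: Fpow_def funpow_Suc_right comp_def)
  also have "\<dots> = Fset (mpow P (Suc k)) A"
    unfolding Suc mpow_Suc
    by (rule Fset_matrix_mult[symmetric]) (auto intro: stochastic_nonneg stochastic_mpow assms)
  finally show ?case .
qed

section \<open>SIA index and Sarymsakov matrices\<close>

definition s_step_cond :: "real^'n^'n \<Rightarrow> nat \<Rightarrow> 'n set \<Rightarrow> 'n set \<Rightarrow> bool" where
  "s_step_cond P k A B \<longleftrightarrow> 1 \<le> k \<and>
      (Fpow P k A \<inter> Fpow P k B \<noteq> {} \<or>
       (Fpow P k A \<inter> Fpow P k B = {} \<and> card (Fpow P k A \<union> Fpow P k B) > card (A \<union> B)))"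

lemma s_step_eq_Least: "s_step P A B = (LEAST k. s_step_cond P k A B)"
  unfolding s_step_def s_step_cond_def ..

lemma s_step_cond_1_iff:
  "s_step_cond P 1 A B \<longleftrightarrow> Fset P A \<inter> Fset P B \<noteq> {} \<or> card (A \<union> B) < card (Fset P A \<union> Fset P B)"
  by (auto simp: s_step_cond_def Fpow_def)

definition sarymsakov :: "real^'n^'n \<Rightarrow> bool" where
  "sarymsakov P \<longleftrightarrow> (\<forall>A B. A \<noteq> {} \<longrightarrow> B \<noteq> {} \<longrightarrow> A \<inter> B = {} \<longrightarrow>
      Fset P A \<inter> Fset P B \<noteq> {} \<or> card (A \<union> B) < card (Fset P A \<union> Fset P B))"

lemma SIA_stochastic: "SIA P \<Longrightarrow> stochastic P"
  by (simp add: SIA_def)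

lemma SIA_eventually_positive_column:
  fixes P :: "real^'n^'n"
  assumes "SIA P"
  obtains m j where "1 \<le> m" "\<And>i. 0 < mpow P m $ i $ j"
proof -
  obtain c :: "real^'n" where c: "\<forall>j. 0 \<le> c $ j" "(\<Sum>j\<in>UNIV. c $ j) = 1"
    and lim: "(\<lambda>m. mpow P m) \<longlonglongrightarrow> (\<chi> i. c)"
    using assms unfolding SIA_def by blast
  obtain j where j: "0 < c $ j"
    using c sum_pos_iff_ex_pos[of UNIV "\<lambda>j. c $ j"] by auto
  have "(\<lambda>m. mpow P m $ i $ j) \<longlonglongrightarrow> c $ j" for i
    using tendsto_vec_nth[OF tendsto_vec_nth[OF lim]] by simp
  then have "\<forall>\<^sub>F m in sequentially. 0 < mpow P m $ i $ j" for i
    using j by (rule order_tendstoD)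
  then have "\<forall>\<^sub>F m in sequentially. \<forall>i. 0 < mpow P m $ i $ j"
    by (rule eventually_all_finite)
  then obtain N where "\<And>m. N \<le> m \<Longrightarrow> \<forall>i. 0 < mpow P m $ i $ j"
    unfolding eventually_sequentially by blast
  then show thesis
    using that[of "Suc N" j] by simp
qed

lemma SIA_rows_merge:
  fixes P :: "real^'n^'n"
  assumes "SIA P"
  shows "(\<lambda>m. mpow P m $ i $ j - mpow P m $ i' $ j) \<longlonglongrightarrow> 0"
proof -
  obtain c :: "real^'n" where lim: "(\<lambda>m. mpow P m) \<longlonglongrightarrow> (\<chi> i. c)"
    using assms unfolding SIA_def by blast
  have "(\<lambda>m. mpow P m $ k $ j) \<longlonglongrightarrow> c $ j" for k
    using tendsto_vec_nth[OF tendsto_vec_nth[OF lim]] by simp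
  from tendsto_diff[OF this this] show ?thesis
    by simp
qed

lemma s_step_cond_s_step:
  assumes "SIA P" "A \<noteq> {}" "B \<noteq> {}"
  shows "s_step_cond P (s_step P A B) A B"
proof -
  obtain m j where m: "1 \<le> m" "\<And>i. 0 < mpow P m $ i $ j"
    using SIA_eventually_positive_column[OF assms(1)] by blast
  then have "j \<in> Fpow P m A \<inter> Fpow P m B"
    using assms unfolding Fpow_eq_Fset_mpow[OF SIA_stochastic[OF assms(1)]] Fset_def by auto
  then have "s_step_cond P m A B"
    using m(1) unfolding s_step_cond_def by blast
  then show ?thesis
    unfolding s_step_eq_Least by (rule LeastI)
qed

lemma s_step_le: "s_step_cond P k A B \<Longrightarrow> s_step P A B \<le> k"
  unfolding s_step_eq_Least by (rule Least_le)

lemma s_step_pos: "SIA P \<Longrightarrow> A \<noteq> {} \<Longrightarrow> B \<noteq> {} \<Longrightarrow> 1 \<le> s_step P A B"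
  using s_step_cond_s_step unfolding s_step_cond_def by blast

lemma finite_s_steps: "finite {s_step P A B | A B. A \<noteq> {} \<and> B \<noteq> {} \<and> A \<inter> B = {}}"
  by (rule finite_subset[of _ "(\<lambda>(A, B). s_step P A B) ` UNIV"]) auto

lemma s_step_le_SIA_index:
  "A \<noteq> {} \<Longrightarrow> B \<noteq> {} \<Longrightarrow> A \<inter> B = {} \<Longrightarrow> s_step P A B \<le> SIA_index P"
  unfolding SIA_index_def by (rule Max_ge[OF finite_s_steps]) blast

lemma SIA_index_attained:
  fixes P :: "real^'n^'n"
  assumes "2 \<le> CARD('n)"
  obtains A B where "A \<noteq> {}" "B \<noteq> {}" "A \<inter> B = {}" "SIA_index P = s_step P A B"
proof -
  obtain T :: "'n set" where "card T = 2"
    using obtain_subset_with_card_n[OF assms] by metis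
  then obtain a b :: 'n where "a \<noteq> b"
    by (metis card_2_iff)
  then have "s_step P {a} {b} \<in> {s_step P A B | A B. A \<noteq> {} \<and> B \<noteq> {} \<and> A \<inter> B = {}}"
    by blast
  then have "SIA_index P \<in> {s_step P A B | A B. A \<noteq> {} \<and> B \<noteq> {} \<and> A \<inter> B = {}}"
    unfolding SIA_index_def by (intro Max_in[OF finite_s_steps]) blast
  then show thesis
    using that by blast
qed

lemma SIA_index_pos:
  fixes P :: "real^'n^'n"
  assumes "SIA P" "2 \<le> CARD('n)"
  shows "1 \<le> SIA_index P"
proof -
  obtain A B where "A \<noteq> {}" "B \<noteq> {}" "SIA_index P = s_step P A B"
    using SIA_index_attained[OF assms(2)] by metis
  then show ?thesis
    using s_step_pos[OF assms(1)] by simp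
qed

lemma SIA_index_le:
  fixes P :: "real^'n^'n"
  assumes "2 \<le> CARD('n)"
    and "\<And>A B. A \<noteq> {} \<Longrightarrow> B \<noteq> {} \<Longrightarrow> A \<inter> B = {} \<Longrightarrow> s_step_cond P k A B"
  shows "SIA_index P \<le> k"
proof -
  obtain A B where "A \<noteq> {}" "B \<noteq> {}" "A \<inter> B = {}" "SIA_index P = s_step P A B"
    using SIA_index_attained[OF assms(1)] by metis
  then show ?thesis
    by (metis assms(2) s_step_le)
qed

lemma mem_S_set_iff: "P \<in> S_set k \<longleftrightarrow> SIA P \<and> 1 \<le> SIA_index P \<and> SIA_index P \<le> k"
  by (auto simp: S_set_def V_set_def)

lemma SIA_index_eq_1_iff:
  fixes P :: "real^'n^'n"
  assumes "SIA P" "2 \<le> CARD('n)"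
  shows "SIA_index P = 1 \<longleftrightarrow> sarymsakov P"
proof
  assume index: "SIA_index P = 1"
  show "sarymsakov P"
    unfolding sarymsakov_def
  proof (intro allI impI)
    fix A B :: "'n set"
    assume AB: "A \<noteq> {}" "B \<noteq> {}" "A \<inter> B = {}"
    then have "s_step P A B = 1"
      using s_step_le_SIA_index[OF AB, of P] s_step_pos[OF assms(1) AB(1,2)] index by simp
    then have "s_step_cond P 1 A B"
      using s_step_cond_s_step[OF assms(1) AB(1,2)] by metis
    then show "Fset P A \<inter> Fset P B \<noteq> {} \<or> card (A \<union> B) < card (Fset P A \<union> Fset P B)"
      unfolding s_step_cond_1_iff .
  qed
next
  assume "sarymsakov P"
  then have "s_step_cond P 1 A B" if "A \<noteq> {}" "B \<noteq> {}" "A \<inter> B = {}" for A B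
    using that unfolding sarymsakov_def s_step_cond_1_iff by blast
  then have "SIA_index P \<le> 1"
    by (rule SIA_index_le[OF assms(2)])
  then show "SIA_index P = 1"
    using SIA_index_pos[OF assms] by simp
qed

lemma sarymsakov_mult:
  fixes P Q :: "real^'n^'n"
  assumes P: "stochastic P" "sarymsakov P" and Q: "stochastic Q" "sarymsakov Q"
  shows "sarymsakov (P ** Q)"
  unfolding sarymsakov_def
proof (intro allI impI)
  fix A B :: "'n set"
  assume AB: "A \<noteq> {}" "B \<noteq> {}" "A \<inter> B = {}"
  have F: "Fset (P ** Q) X = Fset Q (Fset P X)" for X
    by (rule Fset_matrix_mult) (use P Q in \<open>auto intro: stochastic_nonneg\<close>)
  show "Fset (P ** Q) A \<inter> Fset (P ** Q) B \<noteq> {} \<or> card (A \<union> B) < card (Fset (P ** Q) A \<union> Fset (P ** Q) B)"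
  proof (cases "Fset P A \<inter> Fset P B = {}")
    case disjoint: True
    then have grow: "card (A \<union> B) < card (Fset P A \<union> Fset P B)"
      using P(2) AB unfolding sarymsakov_def by blast
    have "Fset P A \<noteq> {}" "Fset P B \<noteq> {}"
      using Fset_nonempty[OF P(1)] AB by auto
    then have "Fset Q (Fset P A) \<inter> Fset Q (Fset P B) \<noteq> {} \<or>
        card (Fset P A \<union> Fset P B) < card (Fset Q (Fset P A) \<union> Fset Q (Fset P B))"
      using Q(2) disjoint unfolding sarymsakov_def by blast
    then show ?thesis
      unfolding F using grow by linarith
  next
    case False
    then show ?thesis
      unfolding F using Fset_Int_nonempty[OF Q(1)] by simp
  qed
qed

section \<open>Scrambling powers force convergence\<close>

definition colmax :: "real^'n^'n \<Rightarrow> 'n \<Rightarrow> real" where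
  "colmax X j = Max (range (\<lambda>i. X $ i $ j))"

definition colmin :: "real^'n^'n \<Rightarrow> 'n \<Rightarrow> real" where
  "colmin X j = Min (range (\<lambda>i. X $ i $ j))"

lemma colmax_ge: "X $ i $ j \<le> colmax X j"
  unfolding colmax_def by (rule Max_ge) auto

lemma colmin_le: "colmin X j \<le> X $ i $ j"
  unfolding colmin_def by (rule Min_le) auto

lemma colmax_attained: obtains i where "colmax X j = X $ i $ j"
proof -
  have "colmax X j \<in> range (\<lambda>i. X $ i $ j)"
    unfolding colmax_def by (rule Max_in) auto
  then show thesis
    using that by blast
qed

lemma colmin_attained: obtains i where "colmin X j = X $ i $ j"
proof -
  have "colmin X j \<in> range (\<lambda>i. X $ i $ j)"
    unfolding colmin_def by (rule Min_in) auto
  then show thesis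
    using that by blast
qed

lemma stochastic_row_avg_le:
  assumes W: "stochastic W" and e: "e \<le> W $ i $ j" and h: "\<And>k. x k \<le> h"
  shows "(\<Sum>k\<in>UNIV. W $ i $ k * x k) \<le> e * x j + (1 - e) * h"
proof -
  define V where "V k = W $ i $ k - (if k = j then e else 0)" for k
  have V_nonneg: "0 \<le> V k" for k
    using e stochastic_nonneg[OF W] by (simp add: V_def)
  have "(\<Sum>k\<in>UNIV. W $ i $ k * x k) = (\<Sum>k\<in>UNIV. V k * x k + (if k = j then e * x j else 0))"
    by (rule sum.cong) (auto simp: V_def algebra_simps)
  also have "\<dots> = (\<Sum>k\<in>UNIV. V k * x k) + e * x j"
    by (simp add: sum.distrib)
  also have "(\<Sum>k\<in>UNIV. V k * x k) \<le> (\<Sum>k\<in>UNIV. V k * h)"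
    by (intro sum_mono mult_left_mono h V_nonneg)
  also have "\<dots> = (1 - e) * h"
    using stochastic_row_sum[OF W] by (simp add: V_def sum_subtractf flip: sum_distrib_right)
  finally show ?thesis
    by simp
qed

lemma stochastic_row_avg_ge:
  assumes "stochastic W" "e \<le> W $ i $ j" "\<And>k. l \<le> x k"
  shows "e * x j + (1 - e) * l \<le> (\<Sum>k\<in>UNIV. W $ i $ k * x k)"
  using stochastic_row_avg_le[OF assms(1,2), of "\<lambda>k. - x k" "- l"] assms(3)
  by (simp add: sum_negf)

lemma colmax_mult_le:
  assumes "stochastic A"
  shows "colmax (A ** X) j \<le> colmax X j"
proof -
  obtain i where "colmax (A ** X) j = (A ** X) $ i $ j"
    by (rule colmax_attained)
  also have "\<dots> \<le> 0 * X $ j $ j + (1 - 0) * colmax X j"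
    unfolding matrix_matrix_mult_def vec_lambda_beta
    by (rule stochastic_row_avg_le[OF assms stochastic_nonneg[OF assms]]) (rule colmax_ge)
  finally show ?thesis
    by simp
qed

text \<open>Dobrushin's contraction argument for scrambling matrices.\<close>
lemma column_spread_contraction:
  assumes W: "stochastic W" and e: "\<forall>i i'. \<exists>j. e \<le> W $ i $ j \<and> e \<le> W $ i' $ j"
  shows "colmax (W ** X) j0 - colmin (W ** X) j0 \<le> (1 - e) * (colmax X j0 - colmin X j0)"
proof -
  obtain i1 where i1: "colmax (W ** X) j0 = (W ** X) $ i1 $ j0"
    by (rule colmax_attained)
  obtain i2 where i2: "colmin (W ** X) j0 = (W ** X) $ i2 $ j0"
    by (rule colmin_attained)
  obtain j where j: "e \<le> W $ i1 $ j" "e \<le> W $ i2 $ j"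
    using e by blast
  have "(W ** X) $ i1 $ j0 \<le> e * X $ j $ j0 + (1 - e) * colmax X j0"
    unfolding matrix_matrix_mult_def vec_lambda_beta
    by (rule stochastic_row_avg_le[OF W j(1)]) (rule colmax_ge)
  moreover have "e * X $ j $ j0 + (1 - e) * colmin X j0 \<le> (W ** X) $ i2 $ j0"
    unfolding matrix_matrix_mult_def vec_lambda_beta
    by (rule stochastic_row_avg_ge[OF W j(2)]) (rule colmin_le)
  ultimately show ?thesis
    unfolding i1 i2 by (simp add: algebra_simps)
qed

lemma colmax_le_1: "stochastic X \<Longrightarrow> colmax X j \<le> 1"
  by (metis colmax_attained stochastic_le_1)

lemma colmin_nonneg: "stochastic X \<Longrightarrow> 0 \<le> colmin X j"
  by (metis colmin_attained stochastic_nonneg)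

lemma column_spread_nonneg: "0 \<le> colmax X j - colmin X j"
  by (meson colmax_ge colmin_le order_trans diff_ge_0_iff_ge)

lemma column_spread_mpow_tendsto_0:
  fixes M :: "real^'n^'n"
  assumes M: "stochastic M" and e: "0 < e" "\<forall>i i'. \<exists>j. e \<le> mpow M N $ i $ j \<and> e \<le> mpow M N $ i' $ j"
  shows "(\<lambda>m. colmax (mpow M m) j - colmin (mpow M m) j) \<longlonglongrightarrow> 0"
proof -
  define spread where "spread m = colmax (mpow M m) j - colmin (mpow M m) j" for m
  have e_le_1: "e \<le> 1"
    using e(2) stochastic_le_1[OF stochastic_mpow[OF M]] by (meson order_trans)
  have "spread (Suc m) \<le> (1 - 0) * spread m" for m
    unfolding spread_def mpow_Suc
    by (rule column_spread_contraction[OF M]) (simp add: stochastic_nonneg[OF M])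
  then have "decseq spread"
    by (intro decseq_SucI) simp
  have spread_kN: "spread (k * N) \<le> (1 - e) ^ k" for k
  proof (induction k)
    case 0
    show ?case
      using colmax_le_1[OF stochastic_mpow[OF M], of 0 j] colmin_nonneg[OF stochastic_mpow[OF M], of 0 j]
      unfolding spread_def by simp
  next
    case (Suc k)
    have "spread (Suc k * N) \<le> (1 - e) * spread (k * N)"
      unfolding spread_def mult_Suc mpow_add by (rule column_spread_contraction[OF stochastic_mpow[OF M] e(2)])
    also have "\<dots> \<le> (1 - e) * (1 - e) ^ k"
      using Suc e_le_1 by (intro mult_left_mono) auto
    finally show ?case
      by simp
  qed
  show ?thesis
    unfolding spread_def[symmetric]
  proof (rule LIMSEQ_I)
    fix r :: real
    assume "0 < r"
    then obtain k where k: "(1 - e) ^ k < r"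
      using real_arch_pow_inv[of r "1 - e"] e(1) by auto
    have "norm (spread m - 0) < r" if "k * N \<le> m" for m
      using decseqD[OF \<open>decseq spread\<close> that] spread_kN[of k] k column_spread_nonneg[of "mpow M m" j]
      by (simp add: spread_def abs_less_iff)
    then show "\<exists>m0. \<forall>m\<ge>m0. norm (spread m - 0) < r"
      by blast
  qed
qed

lemma mpow_column_converges:
  fixes M :: "real^'n^'n"
  assumes M: "stochastic M" and spread: "(\<lambda>m. colmax (mpow M m) j - colmin (mpow M m) j) \<longlonglongrightarrow> 0"
  obtains L where "\<And>i. (\<lambda>m. mpow M m $ i $ j) \<longlonglongrightarrow> L"
proof -
  define hi where "hi m = colmax (mpow M m) j" for m
  have "decseq hi"
    unfolding hi_def by (rule decseq_SucI) (simp add: mpow_Suc colmax_mult_le[OF M])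
  moreover have "\<forall>m. 0 \<le> hi m"
    unfolding hi_def using colmin_nonneg[OF stochastic_mpow[OF M]] colmax_ge colmin_le
    by (meson order_trans)
  ultimately obtain L where L: "hi \<longlonglongrightarrow> L"
    using decseq_convergent by blast
  have "(\<lambda>m. mpow M m $ i $ j) \<longlonglongrightarrow> L" for i
  proof -
    have "(\<lambda>m. hi m - mpow M m $ i $ j) \<longlonglongrightarrow> 0"
    proof (rule tendsto_sandwich[OF _ _ tendsto_const spread])
      show "\<forall>\<^sub>F m in sequentially. 0 \<le> hi m - mpow M m $ i $ j"
        by (simp add: hi_def colmax_ge)
      show "\<forall>\<^sub>F m in sequentially. hi m - mpow M m $ i $ j \<le> colmax (mpow M m) j - colmin (mpow M m) j"
        by (simp add: hi_def colmin_le)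
    qed
    from tendsto_diff[OF L this] show ?thesis
      by simp
  qed
  then show thesis
    by (rule that)
qed

lemma SIA_if_mpow_tendsto:
  fixes M :: "real^'n^'n"
  assumes M: "stochastic M" and L: "\<And>i j. (\<lambda>m. mpow M m $ i $ j) \<longlonglongrightarrow> L j"
  shows "SIA M"
proof -
  define c :: "real^'n" where "c = (\<chi> j. L j)"
  have "(\<lambda>m. mpow M m) \<longlonglongrightarrow> (\<chi> i. c)"
    by (intro vec_tendstoI) (simp add: c_def L)
  moreover have "\<forall>j. 0 \<le> c $ j"
    unfolding c_def using L by (auto intro!: LIMSEQ_le_const stochastic_nonneg[OF stochastic_mpow[OF M]])
  moreover have "(\<lambda>m. \<Sum>j\<in>UNIV. mpow M m $ i $ j) \<longlonglongrightarrow> (\<Sum>j\<in>UNIV. L j)" for i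
    by (intro tendsto_sum L)
  then have "(\<lambda>m. 1) \<longlonglongrightarrow> (\<Sum>j\<in>UNIV. c $ j)"
    by (simp add: c_def stochastic_row_sum[OF stochastic_mpow[OF M]])
  then have "(\<Sum>j\<in>UNIV. c $ j) = 1"
    by (rule LIMSEQ_unique[OF tendsto_const, symmetric])
  ultimately show ?thesis
    unfolding SIA_def using M by blast
qed

definition scrambling :: "real^'n^'n \<Rightarrow> bool" where
  "scrambling W \<longleftrightarrow> (\<forall>i i'. \<exists>j. 0 < W $ i $ j \<and> 0 < W $ i' $ j)"

lemma scrambling_uniform:
  assumes "scrambling W"
  obtains e where "0 < e" "\<forall>i i'. \<exists>j. e \<le> W $ i $ j \<and> e \<le> W $ i' $ j"
proof -
  define E where "E = {W $ i $ j | i j. 0 < W $ i $ j}"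
  have "finite E"
    unfolding E_def by (rule finite_subset[of _ "(\<lambda>(i, j). W $ i $ j) ` UNIV"]) auto
  have "E \<noteq> {}"
    using assms unfolding scrambling_def E_def by blast
  have "0 < Min E"
    using \<open>finite E\<close> \<open>E \<noteq> {}\<close> by (auto simp: E_def Min_gr_iff)
  moreover have "\<forall>i i'. \<exists>j. Min E \<le> W $ i $ j \<and> Min E \<le> W $ i' $ j"
    using assms \<open>finite E\<close> unfolding scrambling_def E_def by (blast intro: Min_le)
  ultimately show thesis
    by (rule that)
qed

lemma SIA_if_scrambling_power:
  fixes M :: "real^'n^'n"
  assumes M: "stochastic M" and "scrambling (mpow M N)"
  shows "SIA M"
proof -
  obtain e where "0 < e" "\<forall>i i'. \<exists>j. e \<le> mpow M N $ i $ j \<and> e \<le> mpow M N $ i' $ j"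
    using scrambling_uniform[OF assms(2)] by blast
  then have "\<exists>L. \<forall>i. (\<lambda>m. mpow M m $ i $ j) \<longlonglongrightarrow> L" for j
    using mpow_column_converges[OF M column_spread_mpow_tendsto_0[OF M]] by metis
  then obtain L where "\<And>i j. (\<lambda>m. mpow M m $ i $ j) \<longlonglongrightarrow> L j"
    by metis
  then show ?thesis
    by (rule SIA_if_mpow_tendsto[OF M])
qed

section \<open>Sarymsakov matrices are SIA\<close>

lemma sarymsakov_Fpow_meet_or_grow:
  fixes M :: "real^'n^'n"
  assumes M: "stochastic M" "sarymsakov M" and AB: "A \<noteq> {}" "B \<noteq> {}" "A \<inter> B = {}"
  shows "Fpow M k A \<inter> Fpow M k B \<noteq> {} \<or> card (A \<union> B) + k \<le> card (Fpow M k A \<union> Fpow M k B)"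
proof (induction k)
  case 0
  show ?case by simp
next
  case (Suc k)
  let ?A = "Fpow M k A" and ?B = "Fpow M k B"
  show ?case
  proof (cases "?A \<inter> ?B = {}")
    case True
    moreover have "?A \<noteq> {}" "?B \<noteq> {}"
      using Fpow_nonempty[OF M(1)] AB by auto
    ultimately have "Fset M ?A \<inter> Fset M ?B \<noteq> {} \<or> card (?A \<union> ?B) < card (Fset M ?A \<union> Fset M ?B)"
      using M(2) unfolding sarymsakov_def by blast
    then show ?thesis
      using Suc True unfolding Fpow_Suc by auto
  next
    case False
    then show ?thesis
      unfolding Fpow_Suc using Fset_Int_nonempty[OF M(1)] by blast
  qed
qed

lemma sarymsakov_power_scrambling:
  fixes M :: "real^'n^'n"
  assumes M: "stochastic M" "sarymsakov M"
  shows "scrambling (mpow M CARD('n))"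
  unfolding scrambling_def
proof (intro allI)
  fix i i' :: 'n
  have "Fpow M CARD('n) {i} \<inter> Fpow M CARD('n) {i'} \<noteq> {}"
  proof (cases "i = i'")
    case True
    then show ?thesis
      using Fpow_nonempty[OF M(1)] by simp
  next
    case False
    have "card (Fpow M CARD('n) {i} \<union> Fpow M CARD('n) {i'}) \<le> CARD('n)"
      by (rule card_mono) auto
    then show ?thesis
      using sarymsakov_Fpow_meet_or_grow[OF M, of "{i}" "{i'}" "CARD('n)"] False by auto
  qed
  then show "\<exists>j. 0 < mpow M CARD('n) $ i $ j \<and> 0 < mpow M CARD('n) $ i' $ j"
    unfolding Fpow_eq_Fset_mpow[OF M(1)] Fset_def by auto
qed

lemma sarymsakov_SIA:
  assumes "stochastic M" "sarymsakov M"
  shows "SIA M"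
  using SIA_if_scrambling_power[OF assms(1) sarymsakov_power_scrambling[OF assms]] .

lemma S_set_1_eq:
  assumes "2 \<le> CARD('n)"
  shows "(S_set 1 :: (real^'n^'n) set) = {P. stochastic P \<and> sarymsakov P}"
proof -
  have "P \<in> S_set 1 \<longleftrightarrow> SIA P \<and> SIA_index P = 1" for P :: "real^'n^'n"
    unfolding mem_S_set_iff by auto
  then show ?thesis
    using SIA_index_eq_1_iff[OF _ assms] sarymsakov_SIA SIA_stochastic by blast
qed

lemma S_set_1_mult_closed:
  assumes "2 \<le> CARD('n)"
  shows "mult_closed (S_set 1 :: (real^'n^'n) set)"
  unfolding mult_closed_def S_set_1_eq[OF assms] using stochastic_mult sarymsakov_mult by blast

section \<open>Matrices of self-maps\<close>

definition fun_mat :: "('n \<Rightarrow> 'n) \<Rightarrow> real^'n^'n" where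
  "fun_mat f = (\<chi> i j. if j = f i then 1 else 0)"

lemma fun_mat_nth [simp]: "fun_mat f $ i $ j = (if j = f i then 1 else 0)"
  by (simp add: fun_mat_def)

lemma stochastic_fun_mat: "stochastic (fun_mat f)"
  by (simp add: stochastic_def)

lemma fun_mat_mult: "fun_mat f ** fun_mat g = fun_mat (g \<circ> f)"
  by (simp add: vec_eq_iff matrix_matrix_mult_def if_distrib[of "\<lambda>x. x * _"] cong: if_cong)

lemma mpow_fun_mat: "mpow (fun_mat f) m = fun_mat (f ^^ m)"
proof (induction m)
  case 0
  show ?case by (simp add: vec_eq_iff mat_def)
next
  case (Suc m)
  then show ?case
    by (simp only: mpow_Suc fun_mat_mult funpow_Suc_right)
qed

lemma Fpow_fun_mat: "Fpow (fun_mat f) k A = (f ^^ k) ` A"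
  unfolding Fpow_eq_Fset_mpow[OF stochastic_fun_mat] mpow_fun_mat by (auto simp: Fset_def)

lemma SIA_fun_mat_if_funpow_const:
  assumes const: "\<And>x. (f ^^ N) x = a"
  shows "SIA (fun_mat f)"
proof (rule SIA_if_mpow_tendsto[OF stochastic_fun_mat])
  fix i j
  have "(f ^^ m) i = a" if "N \<le> m" for m
  proof -
    have "f ^^ m = f ^^ N \<circ> f ^^ (m - N)"
      using that by (simp flip: funpow_add)
    then show ?thesis
      by (simp add: const)
  qed
  then have "\<forall>\<^sub>F m in sequentially. mpow (fun_mat f) m $ i $ j = (if j = a then 1 else 0)"
    unfolding eventually_sequentially mpow_fun_mat by auto
  then show "(\<lambda>m. mpow (fun_mat f) m $ i $ j) \<longlonglongrightarrow> (if j = a then 1 else 0)"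
    by (rule tendsto_eventually)
qed

lemma fun_mat_mem_S_set:
  fixes f :: "'n::finite \<Rightarrow> 'n"
  assumes "2 \<le> CARD('n)" "1 \<le> N" "N \<le> k" and const: "\<And>x. (f ^^ N) x = a"
  shows "fun_mat f \<in> S_set k"
proof -
  have "Fpow (fun_mat f) N A = {a}" if "A \<noteq> {}" for A
    using that by (auto simp: Fpow_fun_mat const)
  then have "SIA_index (fun_mat f) \<le> N"
    using assms(2) by (intro SIA_index_le[OF assms(1)]) (simp add: s_step_cond_def)
  moreover have "SIA (fun_mat f)"
    by (rule SIA_fun_mat_if_funpow_const[OF const])
  ultimately show ?thesis
    using SIA_index_pos[OF _ assms(1)] assms(3) by (simp add: mem_S_set_iff)
qed

lemma not_SIA_fun_mat_two_fixpoints: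
  assumes "f b = b" "f c = c" "b \<noteq> c"
  shows "\<not> SIA (fun_mat f)"
proof
  assume "SIA (fun_mat f)"
  moreover have "(f ^^ m) x = x" if "f x = x" for x m
    using that by (induction m) auto
  then have "mpow (fun_mat f) m $ b $ b - mpow (fun_mat f) m $ c $ b = 1" for m
    using assms by (simp add: mpow_fun_mat)
  ultimately have "(\<lambda>m. 1 :: real) \<longlonglongrightarrow> 0"
    using SIA_rows_merge[of "fun_mat f" b b c] by simp
  then show False
    using LIMSEQ_unique[OF tendsto_const] by fastforce
qed

text \<open>For \<open>f\<close> collapsing everything onto \<open>a\<close> except \<open>c \<mapsto> b\<close>, and \<open>g\<close> collapsing onto \<open>c\<close>
  except \<open>a \<mapsto> b\<close>, both squares are constant, yet \<open>g \<circ> f\<close> fixes both \<open>b\<close> and \<open>c\<close>.\<close>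
lemma S_set_not_mult_closed:
  assumes "3 \<le> CARD('n)" "2 \<le> k"
  shows "\<not> mult_closed (S_set k :: (real^'n^'n) set)"
proof -
  obtain T :: "'n set" where "card T = 3"
    using obtain_subset_with_card_n[OF assms(1)] by metis
  then obtain a b c :: 'n where abc: "a \<noteq> b" "b \<noteq> c" "a \<noteq> c"
    by (metis card_3_iff)
  define f where "f x = (if x = c then b else a)" for x
  define g where "g x = (if x = a then b else c)" for x
  have f2: "(f ^^ 2) x = a" and g2: "(g ^^ 2) x = c" for x
    using abc by (simp_all add: f_def g_def numeral_2_eq_2)
  have "2 \<le> CARD('n)"
    using assms(1) by simp
  then have "fun_mat f \<in> S_set k" "fun_mat g \<in> S_set k"
    using fun_mat_mem_S_set[OF _ _ assms(2) f2] fun_mat_mem_S_set[OF _ _ assms(2) g2] by simp_all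
  moreover have "fun_mat f ** fun_mat g \<notin> S_set k"
    unfolding fun_mat_mult mem_S_set_iff
    using not_SIA_fun_mat_two_fixpoints[of "g \<circ> f" b c] abc by (simp add: f_def g_def)
  ultimately show ?thesis
    unfolding mult_closed_def by blast
qed

theorem theorem4:
  fixes l :: nat
  assumes "CARD('n::finite) \<ge> 3"
    and "l = Max (SIA_index ` {P :: real^'n^'n. SIA P})"
  shows "mult_closed (S_set 1 :: (real^'n^'n) set) \<and>
         (\<forall>k. 2 \<le> k \<and> k \<le> l \<longrightarrow> \<not> mult_closed (S_set k :: (real^'n^'n) set))"
proof -
  have "2 \<le> CARD('n)"
    using assms(1) by simp
  then show ?thesis
    using S_set_1_mult_closed S_set_not_mult_closed[OF assms(1)] by blast
qed

end
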